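(* Let $X$ be a compact metrizable space and let $\Delta$ be a set of Borel probability measures on $X$. The following are equivalent: (1) for any closed $V$ and open $U$ with $V\subseteq U$, there is a closed set $V'$ with $V\subseteq V'\subseteq U$ and $\mu(\partial V')=0$ for all $\mu\in\Delta$; (2) for any closed $V$ and open $U$ with $V\subseteq U$, there is an open set $V'$ with $V\subseteq V'\subseteq U$ and $\mu(\partial V')=0$ for all $\mu\in\Delta$; (3) for any $x\in X$ and any open $U\ni x$, there is a closed neighbourhood $V\subseteq U$ of $x$ with $\mu(\partial V)=0$ for all $\mu\in\Delta$; (4) for any $x\in X$ and any open $U\ni x$, there is an open neighbourhood $V\subseteq U$ of $x$ with $\mu(\partial V)=0$ for all $\mu\in\Delta$. *)

theory Defs
  imports "HOL-Probability.Probability"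
begin

definition borel_prob :: "'a::topological_space measure \<Rightarrow> bool" where
  "borel_prob \<mu> \<longleftrightarrow> sets \<mu> = sets borel \<and> prob_space \<mu>"

definition null_bdry :: "'a::topological_space measure set \<Rightarrow> 'a set \<Rightarrow> bool" where
  "null_bdry D V \<longleftrightarrow> (\<forall>\<mu>\<in>D. emeasure \<mu> (frontier V) = 0)"

definition cond1 :: "'a::topological_space measure set \<Rightarrow> bool" where
  "cond1 D \<longleftrightarrow> (\<forall>V U. closed V \<and> open U \<and> V \<subseteq> U \<longrightarrow>
      (\<exists>V'. closed V' \<and> V \<subseteq> V' \<and> V' \<subseteq> U \<and> null_bdry D V'))"

definition cond2 :: "'a::topological_space measure set \<Rightarrow> bool" where
  "cond2 D \<longleftrightarrow> (\<forall>V U. closed V \<and> open U \<and> V \<subseteq> U \<longrightarrow>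
      (\<exists>V'. open V' \<and> V \<subseteq> V' \<and> V' \<subseteq> U \<and> null_bdry D V'))"

definition cond3 :: "'a::topological_space measure set \<Rightarrow> bool" where
  "cond3 D \<longleftrightarrow> (\<forall>x U. open U \<and> x \<in> U \<longrightarrow>
      (\<exists>V. closed V \<and> x \<in> interior V \<and> V \<subseteq> U \<and> null_bdry D V))"

definition cond4 :: "'a::topological_space measure set \<Rightarrow> bool" where
  "cond4 D \<longleftrightarrow> (\<forall>x U. open U \<and> x \<in> U \<longrightarrow>
      (\<exists>V. open V \<and> x \<in> V \<and> V \<subseteq> U \<and> null_bdry D V))"

end

theory Submission
  imports Defs
begin

text \<open>Taking closure or interior only shrinks the frontier, and the frontier of a finite union lies
  in the union of the frontiers; hence null-boundary sets are stable under closure, interior and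
  finite unions. Normality (regularity, for a point) lets one first shrink U to an open W with
  closure W \<subseteq> U, so that closed and open witnesses can be traded via closure and interior.
  Local open witnesses become a global one by covering the compact set V with finitely many of
  them.\<close>

lemma frontier_closure_subset: "frontier (closure S) \<subseteq> frontier S"
  unfolding frontier_def using interior_mono[OF closure_subset[of S]] by auto

lemma t4_space_shrink:
  fixes V U :: "'a::t4_space set"
  assumes "closed V" "open U" "V \<subseteq> U"
  obtains W where "open W" "V \<subseteq> W" "closure W \<subseteq> U"
proof -
  have "closed (- U)" "V \<inter> - U = {}"
    using assms by auto
  then obtain A B where "open A" "open B" "V \<subseteq> A" "- U \<subseteq> B" "A \<inter> B = {}"
    using t4_space[of V "- U"] assms(1) by blast
  then have "closure A \<subseteq> - B"
    by (metis closure_minimal compl_le_swap1 disjoint_eq_subset_Compl open_closed)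
  with \<open>- U \<subseteq> B\<close> show ?thesis
    using that \<open>open A\<close> \<open>V \<subseteq> A\<close> by blast
qed

lemma t3_space_shrink:
  fixes U :: "'a::t3_space set"
  assumes "open U" "x \<in> U"
  obtains W where "open W" "x \<in> W" "closure W \<subseteq> U"
proof -
  obtain A B where "open A" "open B" "x \<in> A" "- U \<subseteq> B" "A \<inter> B = {}"
    using t3_space[of "- U" x] assms by auto
  then have "closure A \<subseteq> - B"
    by (metis closure_minimal compl_le_swap1 disjoint_eq_subset_Compl open_closed)
  with \<open>- U \<subseteq> B\<close> show ?thesis
    using that \<open>open A\<close> \<open>x \<in> A\<close> by blast
qed

lemma null_bdry_frontier_mono:
  assumes "\<forall>\<mu>\<in>D. sets \<mu> = sets borel" "frontier A \<subseteq> frontier B" "null_bdry D B"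
  shows "null_bdry D A"
  unfolding null_bdry_def
proof
  fix \<mu> assume "\<mu> \<in> D"
  then have "emeasure \<mu> (frontier A) \<le> emeasure \<mu> (frontier B)"
    using assms(1,2) by (intro emeasure_mono) auto
  with \<open>\<mu> \<in> D\<close> assms(3) show "emeasure \<mu> (frontier A) = 0"
    by (simp add: null_bdry_def)
qed

lemma null_bdry_closure:
  assumes "\<forall>\<mu>\<in>D. sets \<mu> = sets borel" "null_bdry D V"
  shows "null_bdry D (closure V)"
  using null_bdry_frontier_mono[OF assms(1) frontier_closure_subset assms(2)] .

lemma null_bdry_interior:
  assumes "\<forall>\<mu>\<in>D. sets \<mu> = sets borel" "null_bdry D V"
  shows "null_bdry D (interior V)"
  using null_bdry_frontier_mono[OF assms(1) frontier_interior_subset assms(2)] .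

lemma null_bdry_Un:
  assumes "\<forall>\<mu>\<in>D. sets \<mu> = sets borel" "null_bdry D A" "null_bdry D B"
  shows "null_bdry D (A \<union> B)"
  unfolding null_bdry_def
proof
  fix \<mu> assume "\<mu> \<in> D"
  then have sets: "sets \<mu> = sets borel" using assms(1) by blast
  have "frontier A \<in> null_sets \<mu>" "frontier B \<in> null_sets \<mu>"
    using assms(2,3) \<open>\<mu> \<in> D\<close> sets by (auto simp: null_bdry_def)
  then have "frontier A \<union> frontier B \<in> null_sets \<mu>" by auto
  then have "frontier (A \<union> B) \<in> null_sets \<mu>"
    using sets by (intro null_sets_subset[OF _ _ frontier_Un_subset]) auto
  then show "emeasure \<mu> (frontier (A \<union> B)) = 0" by auto
qed

lemma null_bdry_Union:
  assumes "\<forall>\<mu>\<in>D. sets \<mu> = sets borel" "finite F" "\<forall>A\<in>F. null_bdry D A"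
  shows "null_bdry D (\<Union>F)"
  using assms(2,3)
proof (induction F rule: finite_induct)
  case empty
  then show ?case by (simp add: null_bdry_def)
next
  case (insert A F)
  then show ?case using null_bdry_Un[OF assms(1)] by simp
qed

lemma cond1_imp_cond2:
  fixes D :: "'a::t4_space measure set"
  assumes "\<forall>\<mu>\<in>D. sets \<mu> = sets borel" "cond1 D"
  shows "cond2 D"
  unfolding cond2_def
proof (intro allI impI)
  fix V U :: "'a set" assume VU: "closed V \<and> open U \<and> V \<subseteq> U"
  then obtain W where W: "open W" "V \<subseteq> W" "closure W \<subseteq> U"
    using t4_space_shrink by metis
  then obtain C where C: "closed C" "closure W \<subseteq> C" "C \<subseteq> U" "null_bdry D C"
    using assms(2) VU unfolding cond1_def by (meson closed_closure)
  have "V \<subseteq> interior C"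
    using W C by (meson closure_subset interior_maximal subset_trans)
  then show "\<exists>V'. open V' \<and> V \<subseteq> V' \<and> V' \<subseteq> U \<and> null_bdry D V'"
    using C null_bdry_interior[OF assms(1)] by (meson interior_subset open_interior order_trans)
qed

lemma cond2_imp_cond1:
  fixes D :: "'a::t4_space measure set"
  assumes "\<forall>\<mu>\<in>D. sets \<mu> = sets borel" "cond2 D"
  shows "cond1 D"
  unfolding cond1_def
proof (intro allI impI)
  fix V U :: "'a set" assume VU: "closed V \<and> open U \<and> V \<subseteq> U"
  then obtain W where W: "open W" "V \<subseteq> W" "closure W \<subseteq> U"
    using t4_space_shrink by metis
  then obtain N where N: "open N" "V \<subseteq> N" "N \<subseteq> W" "null_bdry D N"
    using assms(2) VU unfolding cond2_def by meson
  have "closure N \<subseteq> U"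
    using N W by (meson closure_mono order_trans)
  then show "\<exists>V'. closed V' \<and> V \<subseteq> V' \<and> V' \<subseteq> U \<and> null_bdry D V'"
    using N null_bdry_closure[OF assms(1)] by (meson closed_closure closure_subset order_trans)
qed

lemma cond2_imp_cond4:
  fixes D :: "'a::t1_space measure set"
  assumes "cond2 D"
  shows "cond4 D"
  using assms unfolding cond2_def cond4_def
  by (metis closed_singleton empty_subsetI insert_subset)

lemma cond3_imp_cond4:
  fixes D :: "'a::topological_space measure set"
  assumes "\<forall>\<mu>\<in>D. sets \<mu> = sets borel" "cond3 D"
  shows "cond4 D"
  unfolding cond4_def
proof (intro allI impI)
  fix x and U :: "'a set" assume "open U \<and> x \<in> U"
  then obtain V where "x \<in> interior V" "V \<subseteq> U" "null_bdry D V"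
    using assms(2) unfolding cond3_def by meson
  then show "\<exists>V. open V \<and> x \<in> V \<and> V \<subseteq> U \<and> null_bdry D V"
    using null_bdry_interior[OF assms(1)] by (meson interior_subset open_interior order_trans)
qed

lemma cond4_imp_cond3:
  fixes D :: "'a::t3_space measure set"
  assumes "\<forall>\<mu>\<in>D. sets \<mu> = sets borel" "cond4 D"
  shows "cond3 D"
  unfolding cond3_def
proof (intro allI impI)
  fix x and U :: "'a set" assume "open U \<and> x \<in> U"
  then obtain W where W: "open W" "x \<in> W" "closure W \<subseteq> U"
    using t3_space_shrink by metis
  then obtain N where N: "open N" "x \<in> N" "N \<subseteq> W" "null_bdry D N"
    using assms(2) unfolding cond4_def by meson
  have "x \<in> interior (closure N)"
    using N by (meson closure_subset interior_maximal subsetD)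
  moreover have "closure N \<subseteq> U"
    using N W by (meson closure_mono order_trans)
  ultimately show "\<exists>V. closed V \<and> x \<in> interior V \<and> V \<subseteq> U \<and> null_bdry D V"
    using N null_bdry_closure[OF assms(1)] closed_closure by blast
qed

lemma cond4_imp_cond2:
  assumes "compact (UNIV :: 'a::topological_space set)"
    and "\<forall>\<mu>\<in>D. sets \<mu> = sets borel" "cond4 (D :: 'a measure set)"
  shows "cond2 D"
  unfolding cond2_def
proof (intro allI impI)
  fix V U :: "'a set" assume VU: "closed V \<and> open U \<and> V \<subseteq> U"
  then have "\<forall>x\<in>V. \<exists>W. open W \<and> x \<in> W \<and> W \<subseteq> U \<and> null_bdry D W"
    using assms(3) unfolding cond4_def by blast
  then obtain f where f: "\<And>x. x \<in> V \<Longrightarrow> open (f x) \<and> x \<in> f x \<and> f x \<subseteq> U \<and> null_bdry D (f x)"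
    by metis
  have "compact V"
    using VU assms(1) compact_Int_closed[of UNIV V] by simp
  then obtain K where K: "K \<subseteq> V" "finite K" "V \<subseteq> \<Union>(f ` K)"
    using compactE_image[of V V f] f by blast
  have "null_bdry D (\<Union>(f ` K))"
    using null_bdry_Union[OF assms(2)] K f by auto
  moreover have "open (\<Union>(f ` K))" "\<Union>(f ` K) \<subseteq> U"
    using K f by auto
  ultimately show "\<exists>V'. open V' \<and> V \<subseteq> V' \<and> V' \<subseteq> U \<and> null_bdry D V'"
    using K by blast
qed

theorem lemma2p1:
  fixes D :: "'a::metric_space measure set"
  assumes "compact (UNIV :: 'a set)"
    and "\<forall>\<mu>\<in>D. borel_prob \<mu>"
  shows "(cond1 D \<longleftrightarrow> cond2 D) \<and> (cond2 D \<longleftrightarrow> cond3 D) \<and> (cond3 D \<longleftrightarrow> cond4 D)"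
proof -
  have sets: "\<forall>\<mu>\<in>D. sets \<mu> = sets borel"
    using assms(2) by (simp add: borel_prob_def)
  have "cond1 D \<longleftrightarrow> cond2 D"
    using cond1_imp_cond2[OF sets] cond2_imp_cond1[OF sets] by blast
  moreover have "cond2 D \<longleftrightarrow> cond4 D"
    using cond2_imp_cond4 cond4_imp_cond2[OF assms(1) sets] by blast
  moreover have "cond3 D \<longleftrightarrow> cond4 D"
    using cond3_imp_cond4[OF sets] cond4_imp_cond3[OF sets] by blast
  ultimately show ?thesis by blast
qed

end
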